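(* Let $\varphi:\mathbb{R}\to\mathbb{R}$ be smooth with at most quadratic growth. Then the Omori–Yau maximum principle for $\Delta^{\varphi}$ holds on every properly immersed $[\varphi,\vec e_3]$-minimal surface $\Sigma$ in $\mathbb{R}^3$; in particular $\Sigma$ is $\varphi$-stochastically complete.
   Context: Surfaces are connected, orientable, immersed in $\mathbb{R}^3$, without boundary, with unit normal $N$; $\mu(p)=\langle p,\vec e_3\rangle$, $\eta=\langle N,\vec e_3\rangle$. $\Sigma$ is $[\varphi,\vec e_3]$-minimal if its mean curvature vector $\vec H$ (trace of the second fundamental form) satisfies $\vec H=\dot\varphi(\mu)\eta N$. "At most quadratic growth" means there is $C>0$ with $|\dot\varphi(t)|\le C(1+|t|)$ for all $t$. $\Delta^{\varphi}u=\Delta u+\langle\nabla(\varphi\circ\mu),\nabla u\rangle$ on $\Sigma$ (induced metric). The Omori–Yau maximum principle for $\Delta^\varphi$ holds on $\Sigma$ if for every $u\in C^2(\Sigma)$ with $u^*=\sup_\Sigma u<+\infty$ there is a sequence $p_n$ with $u(p_n)>u^*-1/n$, $|\nabla u(p_n)|<1/n$ and $\Delta^\varphi u(p_n)<1/n$ for all $n$; $\varphi$-stochastic completeness is the same statement without the gradient condition. *)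

theory Defs
  imports "HOL-Analysis.Analysis"
begin

definition ee :: "nat \<Rightarrow> real \<times> real" where
  "ee i = (if i = 1 then (1, 0) else (0, 1))"

definition pd :: "nat \<Rightarrow> (real \<times> real \<Rightarrow> 'b::real_normed_vector) \<Rightarrow> real \<times> real \<Rightarrow> 'b" where
  "pd i f x = frechet_derivative f (at x) (ee i)"

primrec Ck :: "nat \<Rightarrow> (real \<times> real) set \<Rightarrow> (real \<times> real \<Rightarrow> 'b::real_normed_vector) \<Rightarrow> bool" where
  "Ck 0 S f = continuous_on S f"
| "Ck (Suc k) S f = (continuous_on S f \<and> f differentiable_on S \<and> Ck k S (pd 1 f) \<and> Ck k S (pd 2 f))"

definition smooth2 :: "(real \<times> real) set \<Rightarrow> (real \<times> real \<Rightarrow> 'b::real_normed_vector) \<Rightarrow> bool" where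
  "smooth2 S f = (\<forall>k. Ck k S f)"

definition smooth_real :: "(real \<Rightarrow> real) \<Rightarrow> bool" where
  "smooth_real f = (\<forall>k x. ((deriv ^^ k) f) differentiable (at x))"

definition e3comp :: "real \<times> real \<times> real \<Rightarrow> real" where
  "e3comp p = p \<bullet> (0, 0, 1)"

(* Local geometry of a parametrisation X : U \<subseteq> R^2 \<rightarrow> R^3 (X = F \<circ> chart) *)
definition gmet :: "(real \<times> real \<Rightarrow> real \<times> real \<times> real) \<Rightarrow> nat \<Rightarrow> nat \<Rightarrow> real \<times> real \<Rightarrow> real" where
  "gmet X i j x = pd i X x \<bullet> pd j X x"

definition gdet :: "(real \<times> real \<Rightarrow> real \<times> real \<times> real) \<Rightarrow> real \<times> real \<Rightarrow> real" where
  "gdet X x = gmet X 1 1 x * gmet X 2 2 x - gmet X 1 2 x * gmet X 2 1 x"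

definition ginv :: "(real \<times> real \<Rightarrow> real \<times> real \<times> real) \<Rightarrow> nat \<Rightarrow> nat \<Rightarrow> real \<times> real \<Rightarrow> real" where
  "ginv X i j x = (if i = j then gmet X (3 - i) (3 - j) x else - gmet X i j x) / gdet X x"

definition grad_inner :: "(real \<times> real \<Rightarrow> real \<times> real \<times> real) \<Rightarrow> (real \<times> real \<Rightarrow> real) \<Rightarrow> (real \<times> real \<Rightarrow> real) \<Rightarrow> real \<times> real \<Rightarrow> real" where
  "grad_inner X f u x = (\<Sum>i\<in>{1,2}. \<Sum>j\<in>{1,2}. ginv X i j x * pd i f x * pd j u x)"

definition lap :: "(real \<times> real \<Rightarrow> real \<times> real \<times> real) \<Rightarrow> (real \<times> real \<Rightarrow> real) \<Rightarrow> real \<times> real \<Rightarrow> real" where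
  "lap X u x = (\<Sum>i\<in>{1,2}. pd i (\<lambda>y. sqrt (gdet X y) * (\<Sum>j\<in>{1,2}. ginv X i j y * pd j u y)) x)
                / sqrt (gdet X x)"

definition phi_lap :: "(real \<Rightarrow> real) \<Rightarrow> (real \<times> real \<Rightarrow> real \<times> real \<times> real) \<Rightarrow> (real \<times> real \<Rightarrow> real) \<Rightarrow> real \<times> real \<Rightarrow> real" where
  "phi_lap \<phi> X u x = lap X u x + grad_inner X (\<lambda>y. \<phi> (e3comp (X y))) u x"

(* mean curvature vector = trace of the second fundamental form II(X_i,X_j) = <X_ij, N> N *)
definition mean_curv_vec :: "(real \<times> real \<Rightarrow> real \<times> real \<times> real) \<Rightarrow> (real \<times> real \<Rightarrow> real \<times> real \<times> real) \<Rightarrow> real \<times> real \<Rightarrow> real \<times> real \<times> real" where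
  "mean_curv_vec X Nl x = (\<Sum>i\<in>{1,2}. \<Sum>j\<in>{1,2}. ginv X i j x * (pd j (pd i X) x \<bullet> Nl x)) *\<^sub>R Nl x"

(* A connected oriented smooth surface without boundary (Hausdorff, second countable, given by a
   smooth atlas A of charts c : U \<rightarrow> \<Sigma>, U \<subseteq> R^2 open), immersed in R^3 by F, with unit normal N. *)
definition immersed_surface ::
  "((real \<times> real) set \<times> (real \<times> real \<Rightarrow> 'm::{t2_space, second_countable_topology})) set
   \<Rightarrow> ('m \<Rightarrow> real \<times> real \<times> real) \<Rightarrow> ('m \<Rightarrow> real \<times> real \<times> real) \<Rightarrow> bool" where
  "immersed_surface A F N \<longleftrightarrow>
     connected (UNIV :: 'm set)
   \<and> (\<Union>(U, c)\<in>A. c ` U) = UNIV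
   \<and> (\<forall>(U, c)\<in>A. open U \<and> open (c ` U) \<and> (\<exists>c'. homeomorphism U (c ` U) c c'))
   \<and> (\<forall>(U, c)\<in>A. \<forall>(V, d)\<in>A.
        smooth2 (U \<inter> c -` (d ` V)) (inv_into V d \<circ> c))
   \<and> (\<forall>(U, c)\<in>A. smooth2 U (F \<circ> c) \<and> smooth2 U (N \<circ> c)
        \<and> (\<forall>x\<in>U. (\<forall>a b. a *\<^sub>R pd 1 (F \<circ> c) x + b *\<^sub>R pd 2 (F \<circ> c) x = 0 \<longrightarrow> a = 0 \<and> b = 0)
                 \<and> norm (N (c x)) = 1
                 \<and> N (c x) \<bullet> pd 1 (F \<circ> c) x = 0 \<and> N (c x) \<bullet> pd 2 (F \<circ> c) x = 0))"

definition proper_immersion :: "('m::topological_space \<Rightarrow> real \<times> real \<times> real) \<Rightarrow> bool" where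
  "proper_immersion F \<longleftrightarrow> (\<forall>K. compact K \<longrightarrow> compact (F -` K))"

definition phi_minimal ::
  "((real \<times> real) set \<times> (real \<times> real \<Rightarrow> 'm)) set \<Rightarrow> ('m \<Rightarrow> real \<times> real \<times> real)
   \<Rightarrow> ('m \<Rightarrow> real \<times> real \<times> real) \<Rightarrow> (real \<Rightarrow> real) \<Rightarrow> bool" where
  "phi_minimal A F N \<phi> \<longleftrightarrow>
     (\<forall>(U, c)\<in>A. \<forall>x\<in>U. mean_curv_vec (F \<circ> c) (N \<circ> c) x
         = (deriv \<phi> (e3comp (F (c x))) * e3comp (N (c x))) *\<^sub>R N (c x))"

definition C2_on_surface :: "((real \<times> real) set \<times> (real \<times> real \<Rightarrow> 'm)) set \<Rightarrow> ('m \<Rightarrow> real) \<Rightarrow> bool" where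
  "C2_on_surface A u \<longleftrightarrow> (\<forall>(U, c)\<in>A. Ck 2 U (u \<circ> c))"

(* Omori-Yau maximum principle for \<Delta>^\<phi>; gradient and \<Delta>^\<phi> at p are computed in a chart around p
   (they do not depend on the chart). *)
definition omori_yau ::
  "((real \<times> real) set \<times> (real \<times> real \<Rightarrow> 'm)) set \<Rightarrow> ('m \<Rightarrow> real \<times> real \<times> real) \<Rightarrow> (real \<Rightarrow> real) \<Rightarrow> bool" where
  "omori_yau A F \<phi> \<longleftrightarrow>
    (\<forall>u. C2_on_surface A u \<longrightarrow> bdd_above (range u) \<longrightarrow>
      (\<exists>p :: nat \<Rightarrow> 'm. \<forall>n::nat. n \<ge> 1 \<longrightarrow>
          u (p n) > Sup (range u) - 1 / real n
        \<and> (\<exists>(U, c)\<in>A. \<exists>x\<in>U. c x = p n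
             \<and> sqrt (grad_inner (F \<circ> c) (u \<circ> c) (u \<circ> c) x) < 1 / real n
             \<and> phi_lap \<phi> (F \<circ> c) (u \<circ> c) x < 1 / real n)))"

definition phi_stoch_complete ::
  "((real \<times> real) set \<times> (real \<times> real \<Rightarrow> 'm)) set \<Rightarrow> ('m \<Rightarrow> real \<times> real \<times> real) \<Rightarrow> (real \<Rightarrow> real) \<Rightarrow> bool" where
  "phi_stoch_complete A F \<phi> \<longleftrightarrow>
    (\<forall>u. C2_on_surface A u \<longrightarrow> bdd_above (range u) \<longrightarrow>
      (\<exists>p :: nat \<Rightarrow> 'm. \<forall>n::nat. n \<ge> 1 \<longrightarrow>
          u (p n) > Sup (range u) - 1 / real n
        \<and> (\<exists>(U, c)\<in>A. \<exists>x\<in>U. c x = p n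
             \<and> phi_lap \<phi> (F \<circ> c) (u \<circ> c) x < 1 / real n)))"

end

theory Submission
  imports Defs
begin

(* On a [\<phi>, e3]-minimal surface the coordinate Laplacian of the position vector is the mean
   curvature vector, which is normal. Hence for \<gamma> = |F|^2 one gets
   \<Delta>^\<phi> \<gamma> = 4 + 2 \<phi>'(\<mu>) \<mu>: the normal term 2 <F, H> = 2 \<phi>'(\<mu>) \<eta> <F, N> of \<Delta> \<gamma> is
   cancelled by the drift <\<nabla>(\<phi> \<circ> \<mu>), \<nabla> \<gamma>>. With the growth bound on \<phi>' and \<mu>^2 \<le> \<gamma> this
   gives \<Delta>^\<phi> \<gamma> \<le> K (1 + \<gamma>), and always |\<nabla> \<gamma>|^2 \<le> 4 \<gamma>.
   Given u bounded above and q with u(q) > sup u - \<delta>, let \<epsilon> = \<delta> / (1 + \<gamma>(q)). As F is proper,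
   u - \<epsilon> \<gamma> attains its maximum at some p, where \<nabla> u = \<epsilon> \<nabla> \<gamma>, \<Delta>^\<phi> u \<le> \<epsilon> \<Delta>^\<phi> \<gamma> and
   \<epsilon> \<gamma>(p) < 2 \<delta>; so u(p) > sup u - 2 \<delta>, |\<nabla> u|(p) < 3 \<delta> and \<Delta>^\<phi> u(p) < 3 K \<delta>. *)

(* Keeps the index 1 of pd 1 from being rewritten to Suc 0. *)
declare One_nat_def [simp del]

section \<open>Partial derivatives in the plane\<close>

lemma pd_eq_of_has_derivative: "(f has_derivative f') (at x) \<Longrightarrow> pd i f x = f' (ee i)"
  unfolding pd_def by (simp add: frechet_derivative_at[symmetric])

lemmas has_derivative_frechet = frechet_derivative_works[THEN iffD1]

lemma pd_cong_open:
  assumes "open S" "x \<in> S" "\<And>y. y \<in> S \<Longrightarrow> f y = g y"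
  shows "pd i f x = pd i g x"
proof -
  have "(f has_derivative f') (at x) \<longleftrightarrow> (g has_derivative f') (at x)" for f'
    using has_derivative_transform_within_open[OF _ assms(1,2)] assms(3) by metis
  then show ?thesis unfolding pd_def frechet_derivative_def by simp
qed

lemma differentiable_cong_open:
  assumes "open S" "x \<in> S" "\<And>y. y \<in> S \<Longrightarrow> f y = g y" "f differentiable (at x)"
  shows "g differentiable (at x)"
  using has_derivative_transform_within_open[OF _ assms(1,2)] assms(3,4)
  unfolding differentiable_def by metis

lemma pd_add: "f differentiable (at x) \<Longrightarrow> g differentiable (at x) \<Longrightarrow>
    pd i (\<lambda>y. f y + g y) x = pd i f x + pd i g x"
  using pd_eq_of_has_derivative[OF has_derivative_add[OF has_derivative_frechet has_derivative_frechet]]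
  by (simp add: pd_def)

lemma pd_diff: "f differentiable (at x) \<Longrightarrow> g differentiable (at x) \<Longrightarrow>
    pd i (\<lambda>y. f y - g y) x = pd i f x - pd i g x"
  using pd_eq_of_has_derivative[OF has_derivative_diff[OF has_derivative_frechet has_derivative_frechet]]
  by (simp add: pd_def)

lemma pd_minus: "f differentiable (at x) \<Longrightarrow> pd i (\<lambda>y. - f y) x = - pd i f x"
  using pd_eq_of_has_derivative[OF has_derivative_minus[OF has_derivative_frechet]] by (simp add: pd_def)

lemma pd_mult: "f differentiable (at x) \<Longrightarrow> g differentiable (at x) \<Longrightarrow>
    pd i (\<lambda>y. f y * g y :: real) x = f x * pd i g x + pd i f x * g x"
  using pd_eq_of_has_derivative[OF has_derivative_mult[OF has_derivative_frechet has_derivative_frechet]]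
  by (simp add: pd_def)

lemma pd_cmult: "f differentiable (at x) \<Longrightarrow> pd i (\<lambda>y. c * f y :: real) x = c * pd i f x"
  using pd_eq_of_has_derivative[OF has_derivative_mult_right[OF has_derivative_frechet]]
  by (simp add: pd_def)

lemma pd_inner: "f differentiable (at x) \<Longrightarrow> g differentiable (at x) \<Longrightarrow>
    pd i (\<lambda>y. f y \<bullet> g y) x = f x \<bullet> pd i g x + pd i f x \<bullet> g x"
  using pd_eq_of_has_derivative[OF has_derivative_inner[OF has_derivative_frechet has_derivative_frechet]]
  by (simp add: pd_def)

lemma pd_inner_const: "f differentiable (at x) \<Longrightarrow> pd i (\<lambda>y. f y \<bullet> w) x = pd i f x \<bullet> w"
  using pd_eq_of_has_derivative[OF has_derivative_inner_left[OF has_derivative_frechet]]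
  by (simp add: pd_def)

lemma pd_divide: "f differentiable (at x) \<Longrightarrow> g differentiable (at x) \<Longrightarrow> g x \<noteq> 0 \<Longrightarrow>
    pd i (\<lambda>y. f y / g y :: real) x = pd i f x / g x - f x * pd i g x / (g x)\<^sup>2"
proof -
  assume f: "f differentiable (at x)" and g: "g differentiable (at x)" and nz: "g x \<noteq> 0"
  show ?thesis
    unfolding pd_eq_of_has_derivative[OF has_derivative_divide[OF
        has_derivative_frechet[OF f] has_derivative_frechet[OF g] nz]]
    by (simp add: pd_def field_simps power2_eq_square)
qed

lemma pd_chain:
  assumes f: "f differentiable (at x)" and h: "(h has_real_derivative h') (at (f x))"
  shows "pd i (\<lambda>y. h (f y)) x = h' * pd i f x"
proof -
  have "(h has_derivative (\<lambda>t. h' * t)) (at (f x))"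
    using h by (simp add: has_field_derivative_def)
  from pd_eq_of_has_derivative[OF has_derivative_compose[OF has_derivative_frechet[OF f] this]]
  show ?thesis by (simp add: pd_def)
qed

lemma differentiable_sqrt: "f differentiable (at x) \<Longrightarrow> f x > 0 \<Longrightarrow> (\<lambda>y. sqrt (f y)) differentiable (at x)"
  using DERIV_real_sqrt differentiable_compose real_differentiable_def
  by (metis differentiable_def has_field_derivative_def)

lemma pd_sqrt: "f differentiable (at x) \<Longrightarrow> f x > 0 \<Longrightarrow>
    pd i (\<lambda>y. sqrt (f y)) x = pd i f x / (2 * sqrt (f x))"
  using pd_chain[OF _ DERIV_real_sqrt] by (simp add: field_simps)

lemma has_real_derivative_along_line:
  fixes g :: "real \<times> real \<Rightarrow> real"
  assumes "g differentiable (at (x + t *\<^sub>R (v1, v2)))"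
  shows "((\<lambda>s. g (x + s *\<^sub>R (v1, v2))) has_real_derivative
          v1 * pd 1 g (x + t *\<^sub>R (v1, v2)) + v2 * pd 2 g (x + t *\<^sub>R (v1, v2))) (at t)"
proof -
  let ?y = "x + t *\<^sub>R (v1, v2)"
  let ?D = "frechet_derivative g (at ?y)"
  have lin: "linear ?D" using has_derivative_frechet[OF assms] has_derivative_linear by blast
  have "?D (s *\<^sub>R (v1, v2)) = (v1 * pd 1 g ?y + v2 * pd 2 g ?y) * s" for s
  proof -
    have "s *\<^sub>R (v1, v2) = (s * v1) *\<^sub>R ee 1 + (s * v2) *\<^sub>R ee 2" by (simp add: ee_def)
    then show ?thesis
      using linear_add[OF lin] linear_scale[OF lin] by (simp add: pd_def algebra_simps)
  qed
  moreover have "((\<lambda>s. x + s *\<^sub>R (v1, v2)) has_derivative (\<lambda>s. s *\<^sub>R (v1, v2))) (at t)"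
    by (auto intro!: derivative_eq_intros)
  note has_derivative_compose[OF this has_derivative_frechet[OF assms]]
  ultimately show ?thesis by (simp add: has_field_derivative_def)
qed

lemma has_real_derivative_pd1:
  fixes f :: "real \<times> real \<Rightarrow> real"
  assumes "f differentiable (at (a + s, b))"
  shows "((\<lambda>s. f (a + s, b)) has_real_derivative pd 1 f (a + s, b)) (at s)"
  using has_real_derivative_along_line[of f "(a, b)" s 1 0] assms by simp

lemma has_real_derivative_pd2:
  fixes f :: "real \<times> real \<Rightarrow> real"
  assumes "f differentiable (at (a, b + t))"
  shows "((\<lambda>t. f (a, b + t)) has_real_derivative pd 2 f (a, b + t)) (at t)"
  using has_real_derivative_along_line[of f "(a, b)" t 0 1] assms by simp

lemma second_difference_pd21:
  fixes f :: "real \<times> real \<Rightarrow> real"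
  assumes h: "h > 0"
    and d: "\<And>s t. 0 \<le> s \<Longrightarrow> s \<le> h \<Longrightarrow> 0 \<le> t \<Longrightarrow> t \<le> h \<Longrightarrow>
      f differentiable (at (a + s, b + t)) \<and> pd 1 f differentiable (at (a + s, b + t))"
  obtains s t where "0 < s" "s < h" "0 < t" "t < h"
    "f (a + h, b + h) - f (a + h, b) - f (a, b + h) + f (a, b) = h * (h * pd 2 (pd 1 f) (a + s, b + t))"
proof -
  have "\<exists>s. 0 < s \<and> s < h \<and> (f (a + h, b + h) - f (a + h, b)) - (f (a + 0, b + h) - f (a + 0, b))
      = (h - 0) * (pd 1 f (a + s, b + h) - pd 1 f (a + s, b))"
    using h d[of _ 0] d[of _ h]
    by (intro MVT2[where f = "\<lambda>s. f (a + s, b + h) - f (a + s, b)"] DERIV_diff has_real_derivative_pd1) auto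
  then obtain s where s: "0 < s" "s < h"
    "f (a + h, b + h) - f (a + h, b) - f (a, b + h) + f (a, b) = h * (pd 1 f (a + s, b + h) - pd 1 f (a + s, b))"
    by (auto simp: algebra_simps)
  have "\<exists>t. 0 < t \<and> t < h \<and>
      pd 1 f (a + s, b + h) - pd 1 f (a + s, b + 0) = (h - 0) * pd 2 (pd 1 f) (a + s, b + t)"
    using h s d[of s] by (intro MVT2 has_real_derivative_pd2) auto
  then obtain t where "0 < t" "t < h" "pd 1 f (a + s, b + h) - pd 1 f (a + s, b) = h * pd 2 (pd 1 f) (a + s, b + t)"
    by auto
  with s that show ?thesis by simp
qed

lemma second_difference_pd12:
  fixes f :: "real \<times> real \<Rightarrow> real"
  assumes h: "h > 0"
    and d: "\<And>s t. 0 \<le> s \<Longrightarrow> s \<le> h \<Longrightarrow> 0 \<le> t \<Longrightarrow> t \<le> h \<Longrightarrow>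
      f differentiable (at (a + s, b + t)) \<and> pd 2 f differentiable (at (a + s, b + t))"
  obtains s t where "0 < s" "s < h" "0 < t" "t < h"
    "f (a + h, b + h) - f (a + h, b) - f (a, b + h) + f (a, b) = h * (h * pd 1 (pd 2 f) (a + s, b + t))"
proof -
  have "\<exists>t. 0 < t \<and> t < h \<and> (f (a + h, b + h) - f (a + 0, b + h)) - (f (a + h, b + 0) - f (a + 0, b + 0))
      = (h - 0) * (pd 2 f (a + h, b + t) - pd 2 f (a + 0, b + t))"
    using h d[of 0] d[of h]
    by (intro MVT2[where f = "\<lambda>t. f (a + h, b + t) - f (a + 0, b + t)"] DERIV_diff has_real_derivative_pd2) auto
  then obtain t where t: "0 < t" "t < h"
    "f (a + h, b + h) - f (a + h, b) - f (a, b + h) + f (a, b) = h * (pd 2 f (a + h, b + t) - pd 2 f (a, b + t))"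
    by (auto simp: algebra_simps)
  have "\<exists>s. 0 < s \<and> s < h \<and>
      pd 2 f (a + h, b + t) - pd 2 f (a + 0, b + t) = (h - 0) * pd 1 (pd 2 f) (a + s, b + t)"
    using h t d[of _ t] by (intro MVT2 has_real_derivative_pd1) auto
  then obtain s where "0 < s" "s < h" "pd 2 f (a + h, b + t) - pd 2 f (a, b + t) = h * pd 1 (pd 2 f) (a + s, b + t)"
    by auto
  with t that show ?thesis by simp
qed

lemma eventually_nhds_square:
  fixes a b :: real
  assumes "\<forall>\<^sub>F y in nhds (a, b). P y"
  obtains h where "h > 0" "\<And>s t. 0 \<le> s \<Longrightarrow> s \<le> h \<Longrightarrow> 0 \<le> t \<Longrightarrow> t \<le> h \<Longrightarrow> P (a + s, b + t)"
proof -
  obtain r where r: "r > 0" and P: "\<And>y. dist y (a, b) < r \<Longrightarrow> P y"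
    using assms unfolding eventually_nhds_metric by blast
  show ?thesis
  proof (rule that[of "r / 3"])
    fix s t assume "0 \<le> s" "s \<le> r / 3" "0 \<le> t" "t \<le> r / 3"
    then have "dist (a + s, b + t) (a, b) < r"
      using sqrt_sum_squares_le_sum_abs[of s t] r by (simp add: dist_Pair_Pair dist_real_def)
    then show "P (a + s, b + t)" by (rule P)
  qed (use r in simp)
qed

lemma pd_commute:
  fixes f :: "real \<times> real \<Rightarrow> real"
  assumes U: "open U" "x \<in> U"
    and d0: "\<And>y. y \<in> U \<Longrightarrow> f differentiable (at y)"
    and d1: "\<And>y. y \<in> U \<Longrightarrow> pd 1 f differentiable (at y)"
    and d2: "\<And>y. y \<in> U \<Longrightarrow> pd 2 f differentiable (at y)"
    and c12: "continuous_on U (pd 2 (pd 1 f))" and c21: "continuous_on U (pd 1 (pd 2 f))"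
  shows "pd 2 (pd 1 f) x = pd 1 (pd 2 f) x"
proof (rule ccontr)
  define a where "a = pd 2 (pd 1 f) x"
  define b where "b = pd 1 (pd 2 f) x"
  define e where "e = \<bar>a - b\<bar> / 2"
  assume "pd 2 (pd 1 f) x \<noteq> pd 1 (pd 2 f) x"
  then have e: "e > 0" by (simp add: a_def b_def e_def)
  have lim: "((pd 2 (pd 1 f)) \<longlongrightarrow> a) (nhds x)" "((pd 1 (pd 2 f)) \<longlongrightarrow> b) (nhds x)"
    using c12 c21 U unfolding a_def b_def tendsto_at_iff_tendsto_nhds[symmetric]
    by (auto simp: continuous_on_eq_continuous_at isCont_def)
  obtain x1 x2 where x: "x = (x1, x2)" by (cases x)
  have "\<forall>\<^sub>F y in nhds x. y \<in> U \<and> dist (pd 2 (pd 1 f) y) a < e \<and> dist (pd 1 (pd 2 f) y) b < e"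
    by (intro eventually_conj eventually_nhds_in_open tendstoD lim e U)
  then obtain h where h: "h > 0" and near: "\<And>s t. 0 \<le> s \<Longrightarrow> s \<le> h \<Longrightarrow> 0 \<le> t \<Longrightarrow> t \<le> h \<Longrightarrow>
      (x1 + s, x2 + t) \<in> U \<and> dist (pd 2 (pd 1 f) (x1 + s, x2 + t)) a < e
        \<and> dist (pd 1 (pd 2 f) (x1 + s, x2 + t)) b < e"
    unfolding x by (rule eventually_nhds_square) blast
  have diff: "f differentiable (at (x1 + s, x2 + t)) \<and> pd i f differentiable (at (x1 + s, x2 + t))"
    if "i \<in> {1, 2}" "0 \<le> s" "s \<le> h" "0 \<le> t" "t \<le> h" for i s t
    using near[OF that(2-5)] that(1) d0 d1 d2 by auto
  obtain s t where st: "0 < s" "s < h" "0 < t" "t < h"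
    and Q1: "f (x1 + h, x2 + h) - f (x1 + h, x2) - f (x1, x2 + h) + f (x1, x2)
      = h * (h * pd 2 (pd 1 f) (x1 + s, x2 + t))"
    by (rule second_difference_pd21[OF h diff[of 1]]) simp_all
  obtain s' t' where st': "0 < s'" "s' < h" "0 < t'" "t' < h"
    and Q2: "f (x1 + h, x2 + h) - f (x1 + h, x2) - f (x1, x2 + h) + f (x1, x2)
      = h * (h * pd 1 (pd 2 f) (x1 + s', x2 + t'))"
    by (rule second_difference_pd12[OF h diff[of 2]]) simp_all
  have "pd 2 (pd 1 f) (x1 + s, x2 + t) = pd 1 (pd 2 f) (x1 + s', x2 + t')"
    using Q1 Q2 h by simp
  moreover have "dist (pd 2 (pd 1 f) (x1 + s, x2 + t)) a < e" "dist (pd 1 (pd 2 f) (x1 + s', x2 + t')) b < e"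
    using near st st' by simp_all
  ultimately have "\<bar>a - b\<bar> < 2 * e" by (simp add: dist_real_def)
  then show False by (simp add: e_def)
qed

lemma local_max_second_derivative:
  fixes h k :: "real \<Rightarrow> real"
  assumes d: "d > 0" and max: "\<And>t. \<bar>t\<bar> < d \<Longrightarrow> h t \<le> h 0"
    and h': "\<And>t. \<bar>t\<bar> < d \<Longrightarrow> (h has_real_derivative k t) (at t)"
    and k': "(k has_real_derivative K) (at 0)"
  shows "k 0 = 0" "K \<le> 0"
proof -
  have "(h has_real_derivative k 0) (at 0)" using h' d by simp
  then show k0: "k 0 = 0" by (rule DERIV_local_max[OF _ d]) (simp add: max)
  show "K \<le> 0"
  proof (rule ccontr)
    assume "\<not> K \<le> 0"
    then obtain e where e: "e > 0" and inc: "\<And>s. 0 < s \<Longrightarrow> s < e \<Longrightarrow> k 0 < k (0 + s)"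
      using DERIV_pos_inc_right[OF k'] by (meson not_le)
    define t where "t = min e d / 2"
    have t: "0 < t" "t < e" "t < d" using e d by (auto simp: t_def)
    have "\<exists>z. 0 < z \<and> z < t \<and> h t - h 0 = (t - 0) * k z"
    proof (rule MVT2[OF t(1)])
      fix z assume "0 \<le> z" "z \<le> t"
      with t show "(h has_real_derivative k z) (at z)" by (intro h') simp
    qed
    then obtain z where z: "0 < z" "z < t" "h t - h 0 = t * k z" by auto
    have "k z > 0" using inc[of z] z t k0 by simp
    then have "h t > h 0" using z mult_pos_pos[of t "k z"] t by linarith
    with max[of t] t show False by simp
  qed
qed

lemma local_max_directional:
  fixes f :: "real \<times> real \<Rightarrow> real"
  assumes U: "open U" "x \<in> U" and max: "\<And>y. y \<in> U \<Longrightarrow> f y \<le> f x"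
    and d0: "\<And>y. y \<in> U \<Longrightarrow> f differentiable (at y)"
    and d1: "pd 1 f differentiable (at x)" and d2: "pd 2 f differentiable (at x)"
  shows "v1 * pd 1 f x + v2 * pd 2 f x = 0"
    "v1 * (v1 * pd 1 (pd 1 f) x + v2 * pd 2 (pd 1 f) x) + v2 * (v1 * pd 1 (pd 2 f) x + v2 * pd 2 (pd 2 f) x) \<le> 0"
proof -
  obtain r where r: "r > 0" "ball x r \<subseteq> U" using U open_contains_ball by blast
  define d where "d = r / (norm (v1, v2) + 1)"
  have d: "d > 0" using r by (simp add: d_def add_nonneg_pos)
  have line: "x + t *\<^sub>R (v1, v2) \<in> U" if "\<bar>t\<bar> < d" for t
  proof -
    have "norm (t *\<^sub>R (v1, v2)) \<le> \<bar>t\<bar> * (norm (v1, v2) + 1)"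
      unfolding norm_scaleR by (simp add: mult_left_mono)
    also have "\<dots> < r"
      using that r by (simp add: d_def pos_less_divide_eq add_nonneg_pos)
    finally show ?thesis
      using r(2) by (metis subsetD mem_ball dist_norm add_diff_cancel_left' norm_minus_commute)
  qed
  define k where "k t = v1 * pd 1 f (x + t *\<^sub>R (v1, v2)) + v2 * pd 2 f (x + t *\<^sub>R (v1, v2))" for t
  have h': "((\<lambda>s. f (x + s *\<^sub>R (v1, v2))) has_real_derivative k t) (at t)" if "\<bar>t\<bar> < d" for t
    unfolding k_def by (rule has_real_derivative_along_line) (use d0 line[OF that] in auto)
  have "(k has_real_derivative
      v1 * (v1 * pd 1 (pd 1 f) x + v2 * pd 2 (pd 1 f) x) + v2 * (v1 * pd 1 (pd 2 f) x + v2 * pd 2 (pd 2 f) x)) (at 0)"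
    unfolding k_def[abs_def]
    using has_real_derivative_along_line[of "pd 1 f" x 0 v1 v2, unfolded scaleR_zero_left add_0_right]
      has_real_derivative_along_line[of "pd 2 f" x 0 v1 v2, unfolded scaleR_zero_left add_0_right] d1 d2
    by (intro DERIV_add DERIV_cmult) auto
  moreover have "f (x + t *\<^sub>R (v1, v2)) \<le> f (x + 0 *\<^sub>R (v1, v2))" if "\<bar>t\<bar> < d" for t
    using max[OF line[OF that]] unfolding scaleR_zero_left add_0_right .
  ultimately show "v1 * pd 1 f x + v2 * pd 2 f x = 0"
    "v1 * (v1 * pd 1 (pd 1 f) x + v2 * pd 2 (pd 1 f) x) + v2 * (v1 * pd 1 (pd 2 f) x + v2 * pd 2 (pd 2 f) x) \<le> 0"
    using local_max_second_derivative[where h = "\<lambda>s. f (x + s *\<^sub>R (v1, v2))", OF d _ h']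
    unfolding k_def scaleR_zero_left add_0_right by blast+
qed

lemma local_max_pd:
  fixes f :: "real \<times> real \<Rightarrow> real"
  assumes U: "open U" "x \<in> U" and max: "\<And>y. y \<in> U \<Longrightarrow> f y \<le> f x"
    and d0: "\<And>y. y \<in> U \<Longrightarrow> f differentiable (at y)"
    and d1: "pd 1 f differentiable (at x)" and d2: "pd 2 f differentiable (at x)"
    and pos_def: "a > 0" "a * c - b * b > 0"
  shows "pd 1 f x = 0" "pd 2 f x = 0"
    "a * pd 1 (pd 1 f) x + b * pd 1 (pd 2 f) x + b * pd 2 (pd 1 f) x + c * pd 2 (pd 2 f) x \<le> 0"
proof -
  note dir = local_max_directional[OF U max d0 d1 d2]
  show "pd 1 f x = 0" "pd 2 f x = 0" using dir(1)[of 1 0] dir(1)[of 0 1] by simp_all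
  have "(a * c - b * b) * pd 2 (pd 2 f) x \<le> 0"
    using dir(2)[of 0 1] pos_def by (simp add: mult_nonneg_nonpos)
  then have "a * (a * pd 1 (pd 1 f) x + b * pd 1 (pd 2 f) x + b * pd 2 (pd 1 f) x + c * pd 2 (pd 2 f) x) \<le> 0"
    using dir(2)[of a b] by (simp add: algebra_simps)
  then show "a * pd 1 (pd 1 f) x + b * pd 1 (pd 2 f) x + b * pd 2 (pd 1 f) x + c * pd 2 (pd 2 f) x \<le> 0"
    using pos_def by (simp add: mult_le_0_iff)
qed

lemma local_max_minus_scaled:
  fixes w g :: "real \<times> real \<Rightarrow> real"
  assumes U: "open U" "x \<in> U" and max: "\<And>y. y \<in> U \<Longrightarrow> w y - \<epsilon> * g y \<le> w x - \<epsilon> * g x"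
    and dw: "\<And>y. y \<in> U \<Longrightarrow> w differentiable (at y)" and dg: "\<And>y. y \<in> U \<Longrightarrow> g differentiable (at y)"
    and dpw: "\<And>j. j \<in> {1, 2} \<Longrightarrow> pd j w differentiable (at x)"
    and dpg: "\<And>j. j \<in> {1, 2} \<Longrightarrow> pd j g differentiable (at x)"
    and pos_def: "a > 0" "a * c - b * b > 0"
  shows "pd 1 w x = \<epsilon> * pd 1 g x" "pd 2 w x = \<epsilon> * pd 2 g x"
    "a * pd 1 (pd 1 w) x + b * pd 1 (pd 2 w) x + b * pd 2 (pd 1 w) x + c * pd 2 (pd 2 w) x
      \<le> \<epsilon> * (a * pd 1 (pd 1 g) x + b * pd 1 (pd 2 g) x + b * pd 2 (pd 1 g) x + c * pd 2 (pd 2 g) x)"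
proof -
  define f where "f y = w y - \<epsilon> * g y" for y
  have dg': "(\<lambda>y. \<epsilon> * g y) differentiable (at y)" if "y \<in> U" for y
    using dg[OF that] by simp
  have df: "f differentiable (at y)" if "y \<in> U" for y
    unfolding f_def[abs_def] using dw[OF that] dg'[OF that] by (rule differentiable_diff)
  have pf: "pd j f y = pd j w y - \<epsilon> * pd j g y" if "y \<in> U" for j y
    unfolding f_def[abs_def] pd_diff[OF dw[OF that] dg'[OF that]] pd_cmult[OF dg[OF that]] ..
  have dpf: "pd j f differentiable (at x)" if "j \<in> {1, 2}" for j
  proof (rule differentiable_cong_open[OF U])
    show "pd j w y - \<epsilon> * pd j g y = pd j f y" if "y \<in> U" for y using pf[OF that] by simp
    show "(\<lambda>y. pd j w y - \<epsilon> * pd j g y) differentiable (at x)"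
      using dpw[OF that] dpg[OF that] by simp
  qed
  have ppf: "pd i (pd j f) x = pd i (pd j w) x - \<epsilon> * pd i (pd j g) x" if "j \<in> {1, 2}" for i j
  proof -
    have "pd i (pd j f) x = pd i (\<lambda>y. pd j w y - \<epsilon> * pd j g y) x"
      by (rule pd_cong_open[OF U]) (simp add: pf)
    also have "\<dots> = pd i (pd j w) x - \<epsilon> * pd i (pd j g) x"
      using pd_diff[OF dpw[OF that], of "\<lambda>y. \<epsilon> * pd j g y" i] pd_cmult[OF dpg[OF that], of i \<epsilon>]
        dpg[OF that] by simp
    finally show ?thesis .
  qed
  have "f y \<le> f x" if "y \<in> U" for y using max[OF that] by (simp add: f_def)
  note crit = local_max_pd[OF U this df dpf[of 1, simplified] dpf[of 2, simplified] pos_def]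
  show "pd 1 w x = \<epsilon> * pd 1 g x" "pd 2 w x = \<epsilon> * pd 2 g x"
    using crit(1,2) pf[OF U(2)] by simp_all
  show "a * pd 1 (pd 1 w) x + b * pd 1 (pd 2 w) x + b * pd 2 (pd 1 w) x + c * pd 2 (pd 2 w) x
      \<le> \<epsilon> * (a * pd 1 (pd 1 g) x + b * pd 1 (pd 2 g) x + b * pd 2 (pd 1 g) x + c * pd 2 (pd 2 g) x)"
    using crit(3) ppf[of 1] ppf[of 2] by (simp add: algebra_simps)
qed

section \<open>Orthogonal decomposition in three-space\<close>

definition cross_prod :: "real \<times> real \<times> real \<Rightarrow> real \<times> real \<times> real \<Rightarrow> real \<times> real \<times> real" where
  "cross_prod a b = (fst (snd a) * snd (snd b) - snd (snd a) * fst (snd b),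
                     snd (snd a) * fst b - fst a * snd (snd b),
                     fst a * fst (snd b) - fst (snd a) * fst b)"

lemma cross_prod_decomposition:
  fixes v L1 L2 :: "real \<times> real \<times> real"
  shows "((L1 \<bullet> L1) * (L2 \<bullet> L2) - (L1 \<bullet> L2) * (L1 \<bullet> L2)) *\<^sub>R v
     = (v \<bullet> cross_prod L1 L2) *\<^sub>R cross_prod L1 L2
       + ((v \<bullet> L1) * (L2 \<bullet> L2) - (v \<bullet> L2) * (L1 \<bullet> L2)) *\<^sub>R L1
       + ((v \<bullet> L2) * (L1 \<bullet> L1) - (v \<bullet> L1) * (L1 \<bullet> L2)) *\<^sub>R L2"
proof -
  obtain a b c where v: "v = (a, b, c)" by (metis prod.collapse)
  obtain p q r where L1: "L1 = (p, q, r)" by (metis prod.collapse)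
  obtain s t u where L2: "L2 = (s, t, u)" by (metis prod.collapse)
  show ?thesis unfolding v L1 L2
    by (simp add: cross_prod_def inner_Pair) (intro conjI; algebra)
qed

lemma inner_cross_prod_self:
  fixes L1 L2 :: "real \<times> real \<times> real"
  shows "cross_prod L1 L2 \<bullet> cross_prod L1 L2 = (L1 \<bullet> L1) * (L2 \<bullet> L2) - (L1 \<bullet> L2) * (L1 \<bullet> L2)"
proof -
  obtain p q r where L1: "L1 = (p, q, r)" by (metis prod.collapse)
  obtain s t u where L2: "L2 = (s, t, u)" by (metis prod.collapse)
  show ?thesis unfolding L1 L2 by (simp add: cross_prod_def inner_Pair) algebra
qed

lemma gram_det_pos:
  fixes L1 L2 :: "'a::real_inner"
  assumes indep: "\<forall>a b. a *\<^sub>R L1 + b *\<^sub>R L2 = 0 \<longrightarrow> a = 0 \<and> b = 0"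
  shows "(L1 \<bullet> L1) * (L2 \<bullet> L2) - (L1 \<bullet> L2) * (L1 \<bullet> L2) > 0"
proof -
  have "L2 \<noteq> 0" using indep[rule_format, of 0 1] by auto
  then have G: "L2 \<bullet> L2 > 0" by simp
  define M where "M = (L2 \<bullet> L2) *\<^sub>R L1 - (L1 \<bullet> L2) *\<^sub>R L2"
  have "M \<noteq> 0" using indep[rule_format, of "L2 \<bullet> L2" "- (L1 \<bullet> L2)"] G by (auto simp: M_def)
  then have "M \<bullet> M > 0" by simp
  moreover have "M \<bullet> M = (L2 \<bullet> L2) * ((L1 \<bullet> L1) * (L2 \<bullet> L2) - (L1 \<bullet> L2) * (L1 \<bullet> L2))"
    by (simp add: M_def inner_diff_left inner_diff_right inner_commute algebra_simps)
  ultimately show ?thesis using G by (simp add: zero_less_mult_iff)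
qed

lemma inner_decomp_unit_normal:
  fixes v w L1 L2 N :: "real \<times> real \<times> real"
  assumes N1: "N \<bullet> N = 1" and NL1: "N \<bullet> L1 = 0" and NL2: "N \<bullet> L2 = 0"
    and D: "(L1 \<bullet> L1) * (L2 \<bullet> L2) - (L1 \<bullet> L2) * (L1 \<bullet> L2) > 0"
  shows "v \<bullet> w = (v \<bullet> N) * (w \<bullet> N) +
     ((L2 \<bullet> L2) * (v \<bullet> L1) * (w \<bullet> L1) - (L1 \<bullet> L2) * (v \<bullet> L1) * (w \<bullet> L2)
      - (L1 \<bullet> L2) * (v \<bullet> L2) * (w \<bullet> L1) + (L1 \<bullet> L1) * (v \<bullet> L2) * (w \<bullet> L2))
     / ((L1 \<bullet> L1) * (L2 \<bullet> L2) - (L1 \<bullet> L2) * (L1 \<bullet> L2))"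
proof -
  define d where "d = (L1 \<bullet> L1) * (L2 \<bullet> L2) - (L1 \<bullet> L2) * (L1 \<bullet> L2)"
  define K where "K = cross_prod L1 L2"
  have d: "d > 0" using D by (simp add: d_def)
  have KK: "K \<bullet> K = d" by (simp add: K_def d_def inner_cross_prod_self)
  have dN: "d *\<^sub>R N = (N \<bullet> K) *\<^sub>R K"
    using cross_prod_decomposition[of L1 L2 N] NL1 NL2 by (simp add: d_def K_def inner_commute)
  have "d * d = (N \<bullet> K) * (N \<bullet> K) * d"
    using arg_cong[OF dN, of "\<lambda>z. z \<bullet> z"] N1 KK by simp
  then have NK: "(N \<bullet> K) * (N \<bullet> K) = d" using d by simp
  have "d * (d * ((v \<bullet> N) * (w \<bullet> N))) = d * ((v \<bullet> K) * (w \<bullet> K))"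
  proof -
    have "d * (v \<bullet> N) = (N \<bullet> K) * (v \<bullet> K)" "d * (w \<bullet> N) = (N \<bullet> K) * (w \<bullet> K)"
      using arg_cong[OF dN, of "\<lambda>z. v \<bullet> z"] arg_cong[OF dN, of "\<lambda>z. w \<bullet> z"] by simp_all
    then have "(d * (v \<bullet> N)) * (d * (w \<bullet> N)) = ((N \<bullet> K) * (N \<bullet> K)) * ((v \<bullet> K) * (w \<bullet> K))"
      by simp
    then show ?thesis unfolding NK by (simp add: algebra_simps)
  qed
  then have vwN: "d * ((v \<bullet> N) * (w \<bullet> N)) = (v \<bullet> K) * (w \<bullet> K)" using d by simp
  have "d * (v \<bullet> w) = (d *\<^sub>R v) \<bullet> w" by simp
  also have "\<dots> = (v \<bullet> K) * (w \<bullet> K) + ((v \<bullet> L1) * (L2 \<bullet> L2) - (v \<bullet> L2) * (L1 \<bullet> L2)) * (w \<bullet> L1)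
       + ((v \<bullet> L2) * (L1 \<bullet> L1) - (v \<bullet> L1) * (L1 \<bullet> L2)) * (w \<bullet> L2)"
    unfolding d_def K_def cross_prod_decomposition by (simp add: inner_add_left inner_commute[of w])
  finally show ?thesis using d vwN unfolding d_def[symmetric] by (simp add: field_simps)
qed

section \<open>The Laplacian of an immersion in local coordinates\<close>

lemma sum_one_two: "sum f {1, 2::nat} = f 1 + f 2"
  by simp

lemma Ck_continuous_on: "Ck k S f \<Longrightarrow> continuous_on S f"
  by (cases k) auto

lemma Ck_Suc_differentiable: "open S \<Longrightarrow> y \<in> S \<Longrightarrow> Ck (Suc k) S f \<Longrightarrow> f differentiable (at y)"
  using differentiable_on_eq_differentiable_at by auto

lemma Ck2_differentiable: "open U \<Longrightarrow> y \<in> U \<Longrightarrow> Ck 2 U f \<Longrightarrow> f differentiable (at y)"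
  using Ck_Suc_differentiable[of U y 1 f] by (simp add: numeral_2_eq_2)

lemma Ck2_pd_differentiable:
  "open U \<Longrightarrow> y \<in> U \<Longrightarrow> Ck 2 U f \<Longrightarrow> j \<in> {1, 2} \<Longrightarrow> pd j f differentiable (at y)"
  using Ck_Suc_differentiable[of U y 0 "pd j f"] by (auto simp: numeral_2_eq_2)

lemma Ck2_pd_pd_continuous_on:
  "Ck 2 U f \<Longrightarrow> i \<in> {1, 2} \<Longrightarrow> j \<in> {1, 2} \<Longrightarrow> continuous_on U (pd i (pd j f))"
  by (auto simp: numeral_2_eq_2)

lemma Ck2_pd_commute:
  fixes X :: "real \<times> real \<Rightarrow> 'a::real_inner"
  assumes U: "open U" "x \<in> U" and X: "Ck 2 U X"
  shows "pd 2 (pd 1 X) x = pd 1 (pd 2 X) x"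
proof -
  note dX = Ck2_differentiable[OF U(1) _ X] and dpX = Ck2_pd_differentiable[OF U(1) _ X]
    and cX = Ck2_pd_pd_continuous_on[OF X]
  have "pd 2 (pd 1 X) x \<bullet> w = pd 1 (pd 2 X) x \<bullet> w" for w
  proof -
    define f where "f y = X y \<bullet> w" for y
    have pf: "pd j f y = pd j X y \<bullet> w" if "y \<in> U" for j y
      unfolding f_def using pd_inner_const[OF dX[OF that]] .
    have ppf: "pd i (pd j f) y = pd i (pd j X) y \<bullet> w" if "y \<in> U" "j \<in> {1, 2}" for i j y
      using pd_cong_open[OF U(1) that(1), of "pd j f" "\<lambda>y. pd j X y \<bullet> w"] pf
        pd_inner_const[OF dpX[OF that]] by simp
    have "pd 2 (pd 1 f) x = pd 1 (pd 2 f) x"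
    proof (rule pd_commute[OF U])
      show "f differentiable (at y)" if "y \<in> U" for y
        unfolding f_def using dX[OF that] by simp
      show "pd 1 f differentiable (at y)" "pd 2 f differentiable (at y)" if "y \<in> U" for y
        using differentiable_cong_open[OF U(1) that, of "\<lambda>y. pd _ X y \<bullet> w"] pf dpX[OF that]
        by auto
      have "continuous_on U (pd i (pd j f))" if "i \<in> {1, 2}" "j \<in> {1, 2}" for i j
      proof -
        have "continuous_on U (\<lambda>y. pd i (pd j X) y \<bullet> w)"
          using cX[OF that] by (intro continuous_intros)
        then show ?thesis
          by (rule continuous_on_cong[THEN iffD1, rotated 2]) (use ppf that in auto)
      qed
      then show "continuous_on U (pd 2 (pd 1 f))" "continuous_on U (pd 1 (pd 2 f))" by simp_all
    qed
    then show ?thesis using ppf[OF U(2)] by simp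
  qed
  from this[of "pd 2 (pd 1 X) x - pd 1 (pd 2 X) x"]
  have "(pd 2 (pd 1 X) x - pd 1 (pd 2 X) x) \<bullet> (pd 2 (pd 1 X) x - pd 1 (pd 2 X) x) = 0"
    by (simp only: inner_diff_left diff_self)
  then show ?thesis by simp
qed

text \<open>The coordinate Laplacian of an immersion has no tangential part. In terms of the metric
  coefficients E, F, G, the products pkab = pd k (pd a X) \<bullet> pd b X, the inverse metric gi, its
  derivatives dgi and the drift coefficients B1, B2, this is a polynomial identity.\<close>

lemma coordinate_laplacian_tangential_identity:
  fixes E F G p111 p112 p121 p122 p211 p212 p221 p222 gi11 gi12 gi21 gi22 dD1 dD2
    dgi111 dgi112 dgi121 dgi122 dgi211 dgi212 dgi221 dgi222 B1 B2 iD :: real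
  assumes D: "(E * G - F * F) * iD = 1"
    and s1: "p121 = p211" and s2: "p122 = p212"
    and gi11: "gi11 = G * iD" and gi22: "gi22 = E * iD"
    and gi12: "gi12 = - F * iD" and gi21: "gi21 = - F * iD"
    and dD1: "dD1 = (p111 + p111) * G + E * (p122 + p122) - ((p112 + p121) * F + F * (p121 + p112))"
    and dD2: "dD2 = (p211 + p211) * G + E * (p222 + p222) - ((p212 + p221) * F + F * (p221 + p212))"
    and dgi111: "dgi111 = (p122 + p122) * iD - G * dD1 * iD * iD"
    and dgi112: "dgi112 = - (p112 + p121) * iD - (- F) * dD1 * iD * iD"
    and dgi121: "dgi121 = - (p121 + p112) * iD - (- F) * dD1 * iD * iD"
    and dgi122: "dgi122 = (p111 + p111) * iD - E * dD1 * iD * iD"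
    and dgi211: "dgi211 = (p222 + p222) * iD - G * dD2 * iD * iD"
    and dgi212: "dgi212 = - (p212 + p221) * iD - (- F) * dD2 * iD * iD"
    and dgi221: "dgi221 = - (p221 + p212) * iD - (- F) * dD2 * iD * iD"
    and dgi222: "dgi222 = (p211 + p211) * iD - E * dD2 * iD * iD"
    and B1: "B1 = (dgi111 + dD1 * iD / 2 * gi11) + (dgi221 + dD2 * iD / 2 * gi21)"
    and B2: "B2 = (dgi112 + dD1 * iD / 2 * gi12) + (dgi222 + dD2 * iD / 2 * gi22)"
  shows "gi11 * p111 + gi12 * p121 + gi21 * p211 + gi22 * p221 + B1 * E + B2 * F = 0"
    "gi11 * p112 + gi12 * p122 + gi21 * p212 + gi22 * p222 + B1 * F + B2 * G = 0"
  using D unfolding B1 B2 dgi111 dgi112 dgi121 dgi122 dgi211 dgi212 dgi221 dgi222 dD1 dD2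
    gi11 gi12 gi21 gi22 s1 s2
  by algebra+

locale regular_chart =
  fixes X :: "real \<times> real \<Rightarrow> real \<times> real \<times> real" and U :: "(real \<times> real) set" and x :: "real \<times> real"
  assumes open_U: "open U" and x_in_U: "x \<in> U" and C2: "Ck 2 U X"
    and independent: "\<forall>a b. a *\<^sub>R pd 1 X x + b *\<^sub>R pd 2 X x = 0 \<longrightarrow> a = 0 \<and> b = 0"
begin

lemma X_differentiable: "y \<in> U \<Longrightarrow> X differentiable (at y)"
  using Ck2_differentiable[OF open_U _ C2] .

lemma pd_X_differentiable: "y \<in> U \<Longrightarrow> i \<in> {1, 2} \<Longrightarrow> pd i X differentiable (at y)"
  using Ck2_pd_differentiable[OF open_U _ C2] .

lemma pd_X_commute: "pd 2 (pd 1 X) x = pd 1 (pd 2 X) x"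
  by (rule Ck2_pd_commute[OF open_U x_in_U C2])

lemma gdet_at:
  "gdet X x = (pd 1 X x \<bullet> pd 1 X x) * (pd 2 X x \<bullet> pd 2 X x) - (pd 1 X x \<bullet> pd 2 X x) * (pd 1 X x \<bullet> pd 2 X x)"
  by (simp add: gdet_def gmet_def inner_commute)

lemma gdet_pos: "gdet X x > 0"
  unfolding gdet_at by (rule gram_det_pos[OF independent])

lemma ginv_at:
  "ginv X 1 1 x = (pd 2 X x \<bullet> pd 2 X x) / gdet X x"
  "ginv X 2 2 x = (pd 1 X x \<bullet> pd 1 X x) / gdet X x"
  "ginv X 1 2 x = - (pd 1 X x \<bullet> pd 2 X x) / gdet X x"
  "ginv X 2 1 x = - (pd 1 X x \<bullet> pd 2 X x) / gdet X x"
  by (simp_all add: ginv_def gmet_def inner_commute One_nat_def[symmetric])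

lemma ginv_quadratic_form:
  "ginv X 1 1 x * a1 * b1 + ginv X 1 2 x * a1 * b2 + ginv X 2 1 x * a2 * b1 + ginv X 2 2 x * a2 * b2
   = ((pd 2 X x \<bullet> pd 2 X x) * a1 * b1 - (pd 1 X x \<bullet> pd 2 X x) * a1 * b2
      - (pd 1 X x \<bullet> pd 2 X x) * a2 * b1 + (pd 1 X x \<bullet> pd 1 X x) * a2 * b2) / gdet X x"
  unfolding ginv_at using gdet_pos by (simp add: field_simps)

lemma gmet_differentiable: "a \<in> {1, 2} \<Longrightarrow> b \<in> {1, 2} \<Longrightarrow> gmet X a b differentiable (at x)"
  unfolding gmet_def[abs_def] using pd_X_differentiable[OF x_in_U] by simp

lemma gdet_differentiable: "gdet X differentiable (at x)"
  unfolding gdet_def[abs_def] by (intro differentiable_diff differentiable_mult gmet_differentiable) auto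

lemma ginv_differentiable: "i \<in> {1, 2} \<Longrightarrow> j \<in> {1, 2} \<Longrightarrow> ginv X i j differentiable (at x)"
  unfolding ginv_def[abs_def] using gdet_pos
  by (cases "i = j") (auto intro!: differentiable_divide differentiable_minus gmet_differentiable gdet_differentiable)

lemma sqrt_gdet_differentiable: "(\<lambda>y. sqrt (gdet X y)) differentiable (at x)"
  by (rule differentiable_sqrt[OF gdet_differentiable gdet_pos])

lemma pd_gmet: "a \<in> {1, 2} \<Longrightarrow> b \<in> {1, 2} \<Longrightarrow>
    pd k (gmet X a b) x = pd a X x \<bullet> pd k (pd b X) x + pd k (pd a X) x \<bullet> pd b X x"
  unfolding gmet_def[abs_def] by (rule pd_inner) (use pd_X_differentiable[OF x_in_U] in auto)

lemma pd_gdet: "pd k (gdet X) x = gmet X 1 1 x * pd k (gmet X 2 2) x + pd k (gmet X 1 1) x * gmet X 2 2 x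
    - (gmet X 1 2 x * pd k (gmet X 2 1) x + pd k (gmet X 1 2) x * gmet X 2 1 x)"
proof -
  have "pd k (gdet X) x = pd k (\<lambda>y. gmet X 1 1 y * gmet X 2 2 y) x - pd k (\<lambda>y. gmet X 1 2 y * gmet X 2 1 y) x"
    unfolding gdet_def[abs_def] by (rule pd_diff) (intro differentiable_mult gmet_differentiable; simp)+
  then show ?thesis
    using pd_mult[OF gmet_differentiable gmet_differentiable, of 1 1 2 2 k]
      pd_mult[OF gmet_differentiable gmet_differentiable, of 1 2 2 1 k] by simp
qed

lemma pd_ginv:
  "pd k (ginv X 1 1) x = pd k (gmet X 2 2) x / gdet X x - gmet X 2 2 x * pd k (gdet X) x / (gdet X x)\<^sup>2"
  "pd k (ginv X 2 2) x = pd k (gmet X 1 1) x / gdet X x - gmet X 1 1 x * pd k (gdet X) x / (gdet X x)\<^sup>2"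
  "pd k (ginv X 1 2) x = - pd k (gmet X 1 2) x / gdet X x - (- gmet X 1 2 x) * pd k (gdet X) x / (gdet X x)\<^sup>2"
  "pd k (ginv X 2 1) x = - pd k (gmet X 2 1) x / gdet X x - (- gmet X 2 1 x) * pd k (gdet X) x / (gdet X x)\<^sup>2"
proof -
  have nz: "gdet X x \<noteq> 0" using gdet_pos by simp
  note quot = pd_divide[OF _ gdet_differentiable nz]
  show "pd k (ginv X 1 1) x = pd k (gmet X 2 2) x / gdet X x - gmet X 2 2 x * pd k (gdet X) x / (gdet X x)\<^sup>2"
    "pd k (ginv X 2 2) x = pd k (gmet X 1 1) x / gdet X x - gmet X 1 1 x * pd k (gdet X) x / (gdet X x)\<^sup>2"
    unfolding ginv_def[abs_def] by (simp_all add: quot gmet_differentiable One_nat_def[symmetric])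
  show "pd k (ginv X 1 2) x = - pd k (gmet X 1 2) x / gdet X x - (- gmet X 1 2 x) * pd k (gdet X) x / (gdet X x)\<^sup>2"
    "pd k (ginv X 2 1) x = - pd k (gmet X 2 1) x / gdet X x - (- gmet X 2 1 x) * pd k (gdet X) x / (gdet X x)\<^sup>2"
    unfolding ginv_def[abs_def]
    using quot[OF differentiable_minus[OF gmet_differentiable], of 1 2 k]
      quot[OF differentiable_minus[OF gmet_differentiable], of 2 1 k]
      pd_minus[OF gmet_differentiable, of 1 2 k] pd_minus[OF gmet_differentiable, of 2 1 k]
    by simp_all
qed

lemma pd_sqrt_gdet: "pd k (\<lambda>y. sqrt (gdet X y)) x = pd k (gdet X) x / (2 * sqrt (gdet X x))"
  by (rule pd_sqrt[OF gdet_differentiable gdet_pos])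

definition lap_drift :: "nat \<Rightarrow> real" where
  "lap_drift j = (pd 1 (ginv X 1 j) x + pd 1 (\<lambda>y. sqrt (gdet X y)) x / sqrt (gdet X x) * ginv X 1 j x)
              + (pd 2 (ginv X 2 j) x + pd 2 (\<lambda>y. sqrt (gdet X y)) x / sqrt (gdet X x) * ginv X 2 j x)"

lemma lap_coordinates:
  assumes w: "pd 1 w differentiable (at x)" "pd 2 w differentiable (at x)"
  shows "lap X w x = ginv X 1 1 x * pd 1 (pd 1 w) x + ginv X 1 2 x * pd 1 (pd 2 w) x
     + ginv X 2 1 x * pd 2 (pd 1 w) x + ginv X 2 2 x * pd 2 (pd 2 w) x
     + lap_drift 1 * pd 1 w x + lap_drift 2 * pd 2 w x"
proof -
  have flux: "pd i (\<lambda>y. sqrt (gdet X y) * (ginv X i 1 y * pd 1 w y + ginv X i 2 y * pd 2 w y)) x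
      = sqrt (gdet X x) * ((ginv X i 1 x * pd i (pd 1 w) x + pd i (ginv X i 1) x * pd 1 w x)
          + (ginv X i 2 x * pd i (pd 2 w) x + pd i (ginv X i 2) x * pd 2 w x))
        + pd i (\<lambda>y. sqrt (gdet X y)) x * (ginv X i 1 x * pd 1 w x + ginv X i 2 x * pd 2 w x)"
    if "i \<in> {1, 2}" for i
  proof -
    have g: "ginv X i 1 differentiable (at x)" "ginv X i 2 differentiable (at x)"
      using ginv_differentiable that by auto
    then show ?thesis
      using pd_mult[OF sqrt_gdet_differentiable, of "\<lambda>y. ginv X i 1 y * pd 1 w y + ginv X i 2 y * pd 2 w y" i]
        pd_add[of "\<lambda>y. ginv X i 1 y * pd 1 w y" x "\<lambda>y. ginv X i 2 y * pd 2 w y" i]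
        pd_mult[OF g(1) w(1), of i] pd_mult[OF g(2) w(2), of i] w
      by simp
  qed
  define q where "q = sqrt (gdet X x)"
  have "q > 0" using gdet_pos by (simp add: q_def)
  then show ?thesis
    unfolding lap_def sum_one_two flux[of 1, simplified] flux[of 2, simplified] lap_drift_def q_def[symmetric]
    by (simp add: field_simps)
qed

(* The right-hand side of lap_coordinates, applied to X componentwise. *)
definition lap_position :: "real \<times> real \<times> real" where
  "lap_position = ginv X 1 1 x *\<^sub>R pd 1 (pd 1 X) x + ginv X 1 2 x *\<^sub>R pd 1 (pd 2 X) x
     + ginv X 2 1 x *\<^sub>R pd 2 (pd 1 X) x + ginv X 2 2 x *\<^sub>R pd 2 (pd 2 X) x
     + lap_drift 1 *\<^sub>R pd 1 X x + lap_drift 2 *\<^sub>R pd 2 X x"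

lemma lap_position_tangential: "lap_position \<bullet> pd 1 X x = 0" "lap_position \<bullet> pd 2 X x = 0"
proof -
  define E where "E = pd 1 X x \<bullet> pd 1 X x"
  define F where "F = pd 1 X x \<bullet> pd 2 X x"
  define G where "G = pd 2 X x \<bullet> pd 2 X x"
  define iD where "iD = 1 / gdet X x"
  define p where "p k a b = pd k (pd a X) x \<bullet> pd b X x" for k a b :: nat
  have gd: "gdet X x = E * G - F * F" by (simp add: gdet_at E_def F_def G_def)
  have D: "(E * G - F * F) * iD = 1" using gdet_pos by (simp add: iD_def gd)
  have s: "p 1 2 b = p 2 1 b" for b by (simp add: p_def pd_X_commute)
  have gi: "ginv X 1 1 x = G * iD" "ginv X 2 2 x = E * iD" "ginv X 1 2 x = - F * iD" "ginv X 2 1 x = - F * iD"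
    by (simp_all add: ginv_at E_def F_def G_def iD_def)
  have pg: "pd k (gmet X a b) x = p k a b + p k b a" if "a \<in> {1, 2}" "b \<in> {1, 2}" for k a b
    using pd_gmet[OF that, of k] by (simp add: p_def inner_commute)
  have gx: "gmet X 1 1 x = E" "gmet X 2 2 x = G" "gmet X 1 2 x = F" "gmet X 2 1 x = F"
    by (simp_all add: gmet_def E_def F_def G_def inner_commute)
  have dD: "pd k (gdet X) x = (p k 1 1 + p k 1 1) * G + E * (p k 2 2 + p k 2 2)
      - ((p k 1 2 + p k 2 1) * F + F * (p k 2 1 + p k 1 2))" for k
    unfolding pd_gdet gx by (simp add: pg algebra_simps)
  have dgi: "pd k (ginv X 1 1) x = (p k 2 2 + p k 2 2) * iD - G * pd k (gdet X) x * iD * iD"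
    "pd k (ginv X 2 2) x = (p k 1 1 + p k 1 1) * iD - E * pd k (gdet X) x * iD * iD"
    "pd k (ginv X 1 2) x = - (p k 1 2 + p k 2 1) * iD - (- F) * pd k (gdet X) x * iD * iD"
    "pd k (ginv X 2 1) x = - (p k 2 1 + p k 1 2) * iD - (- F) * pd k (gdet X) x * iD * iD" for k
    unfolding pd_ginv gx iD_def by (simp_all add: pg power2_eq_square)
  have sqrt_gdet: "pd k (\<lambda>y. sqrt (gdet X y)) x / sqrt (gdet X x) = pd k (gdet X) x * iD / 2" for k
    unfolding pd_sqrt_gdet iD_def using gdet_pos by (simp add: field_simps)
  have B: "lap_drift j = (pd 1 (ginv X 1 j) x + pd 1 (gdet X) x * iD / 2 * ginv X 1 j x)
     + (pd 2 (ginv X 2 j) x + pd 2 (gdet X) x * iD / 2 * ginv X 2 j x)" for j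
    unfolding lap_drift_def sqrt_gdet ..
  note identity = coordinate_laplacian_tangential_identity[OF D s[of 1] s[of 2] gi(1,2,3,4) dD[of 1] dD[of 2]
     dgi(1,3,4,2)[of 1] dgi(1,3,4,2)[of 2] B[of 1] B[of 2]]
  show "lap_position \<bullet> pd 1 X x = 0" "lap_position \<bullet> pd 2 X x = 0"
    using identity unfolding lap_position_def p_def E_def F_def G_def
    by (simp_all add: inner_add_left inner_add_right inner_commute)
qed

definition rsq :: "real \<times> real \<Rightarrow> real" where
  "rsq y = X y \<bullet> X y"

lemma rsq_differentiable: "y \<in> U \<Longrightarrow> rsq differentiable (at y)"
  unfolding rsq_def[abs_def] using X_differentiable by simp

lemma pd_rsq: "y \<in> U \<Longrightarrow> pd j rsq y = 2 * (X y \<bullet> pd j X y)"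
  unfolding rsq_def[abs_def] using pd_inner[OF X_differentiable X_differentiable] by (simp add: inner_commute)

lemma pd_rsq_differentiable: "j \<in> {1, 2} \<Longrightarrow> pd j rsq differentiable (at x)"
  by (rule differentiable_cong_open[OF open_U x_in_U, of "\<lambda>y. 2 * (X y \<bullet> pd j X y)"])
    (simp_all add: pd_rsq X_differentiable pd_X_differentiable x_in_U)

lemma pd_pd_rsq: "j \<in> {1, 2} \<Longrightarrow> pd i (pd j rsq) x = 2 * (X x \<bullet> pd i (pd j X) x) + 2 * (pd i X x \<bullet> pd j X x)"
proof -
  assume j: "j \<in> {1, 2}"
  have dX: "X differentiable (at x)" and dpX: "pd j X differentiable (at x)"
    using X_differentiable pd_X_differentiable j x_in_U by auto
  have "pd i (pd j rsq) x = pd i (\<lambda>y. 2 * (X y \<bullet> pd j X y)) x"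
    by (rule pd_cong_open[OF open_U x_in_U]) (simp add: pd_rsq)
  then show ?thesis
    using pd_cmult[OF differentiable_inner[OF dX dpX], of i 2] pd_inner[OF dX dpX, of i]
    by (simp add: algebra_simps)
qed

lemma ginv_trace: "ginv X 1 1 x * (pd 1 X x \<bullet> pd 1 X x) + ginv X 1 2 x * (pd 1 X x \<bullet> pd 2 X x)
   + ginv X 2 1 x * (pd 2 X x \<bullet> pd 1 X x) + ginv X 2 2 x * (pd 2 X x \<bullet> pd 2 X x) = 2"
proof -
  have "ginv X 1 1 x * (pd 1 X x \<bullet> pd 1 X x) + ginv X 1 2 x * (pd 1 X x \<bullet> pd 2 X x)
      + ginv X 2 1 x * (pd 2 X x \<bullet> pd 1 X x) + ginv X 2 2 x * (pd 2 X x \<bullet> pd 2 X x)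
    = 2 * gdet X x / gdet X x"
    unfolding ginv_at gdet_at by (simp add: inner_commute add_divide_distrib diff_divide_distrib algebra_simps)
  then show ?thesis using gdet_pos by simp
qed

lemma lap_rsq: "lap X rsq x = 4 + 2 * (X x \<bullet> lap_position)"
proof -
  have "lap X rsq x = 2 * (ginv X 1 1 x * (pd 1 X x \<bullet> pd 1 X x) + ginv X 1 2 x * (pd 1 X x \<bullet> pd 2 X x)
      + ginv X 2 1 x * (pd 2 X x \<bullet> pd 1 X x) + ginv X 2 2 x * (pd 2 X x \<bullet> pd 2 X x)) + 2 * (X x \<bullet> lap_position)"
    by (simp add: lap_coordinates[OF pd_rsq_differentiable pd_rsq_differentiable] pd_pd_rsq pd_rsq[OF x_in_U]
      lap_position_def algebra_simps)
  then show ?thesis unfolding ginv_trace by simp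
qed

end

lemma e3comp_sq_le: "e3comp v * e3comp v \<le> v \<bullet> v"
proof -
  obtain a b c where "v = (a, b, c)" by (metis prod.collapse)
  then show ?thesis by (simp add: e3comp_def inner_Pair)
qed

lemma linear_growth_product_bound:
  fixes C d m g :: real
  assumes C: "C \<ge> 0" and d: "\<bar>d\<bar> \<le> C * (1 + \<bar>m\<bar>)" and m: "m * m \<le> g"
  shows "4 + 2 * d * m \<le> (4 + 4 * C) * (1 + g)"
proof -
  have g: "g \<ge> 0" using m by (metis order_trans zero_le_square)
  have "\<bar>m\<bar> \<le> 1 + m * m"
    using zero_le_square[of "\<bar>m\<bar> - 1"] by (simp add: algebra_simps abs_mult_self_eq power2_eq_square)
  then have am: "\<bar>m\<bar> \<le> 1 + g" using m by linarith
  have "d * m \<le> C * (1 + \<bar>m\<bar>) * \<bar>m\<bar>"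
    using d by (metis abs_ge_self abs_mult abs_ge_zero mult_right_mono order_trans)
  also have "\<dots> = C * \<bar>m\<bar> + C * (m * m)" by (simp add: algebra_simps abs_mult_self_eq)
  also have "\<dots> \<le> C * (1 + g) + C * g"
    using am m C by (intro add_mono mult_left_mono) auto
  finally show ?thesis using C g by (simp add: algebra_simps)
qed

locale phi_minimal_chart = regular_chart +
  fixes Nl :: "real \<times> real \<Rightarrow> real \<times> real \<times> real" and \<phi> :: "real \<Rightarrow> real"
  assumes unit_normal: "norm (Nl x) = 1"
    and normal_1: "Nl x \<bullet> pd 1 X x = 0" and normal_2: "Nl x \<bullet> pd 2 X x = 0"
    and phi_minimal_at: "mean_curv_vec X Nl x = (deriv \<phi> (e3comp (X x)) * e3comp (Nl x)) *\<^sub>R Nl x"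
    and phi_differentiable: "\<phi> differentiable (at (e3comp (X x)))"
begin

lemma inner_decomp:
  "v \<bullet> w = (v \<bullet> Nl x) * (w \<bullet> Nl x) +
     (ginv X 1 1 x * (v \<bullet> pd 1 X x) * (w \<bullet> pd 1 X x) + ginv X 1 2 x * (v \<bullet> pd 1 X x) * (w \<bullet> pd 2 X x)
     + ginv X 2 1 x * (v \<bullet> pd 2 X x) * (w \<bullet> pd 1 X x) + ginv X 2 2 x * (v \<bullet> pd 2 X x) * (w \<bullet> pd 2 X x))"
proof -
  have "Nl x \<bullet> Nl x = 1" using unit_normal by (simp add: dot_square_norm)
  from inner_decomp_unit_normal[OF this normal_1 normal_2] gdet_pos
  show ?thesis unfolding ginv_quadratic_form gdet_at by blast
qed

lemma lap_position_normal: "lap_position \<bullet> Nl x = deriv \<phi> (e3comp (X x)) * e3comp (Nl x)"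
proof -
  have "mean_curv_vec X Nl x = (lap_position \<bullet> Nl x) *\<^sub>R Nl x"
    unfolding mean_curv_vec_def lap_position_def using normal_1 normal_2
    by (simp add: sum_one_two inner_add_left pd_X_commute algebra_simps inner_commute)
  then have "(lap_position \<bullet> Nl x) *\<^sub>R Nl x = (deriv \<phi> (e3comp (X x)) * e3comp (Nl x)) *\<^sub>R Nl x"
    using phi_minimal_at by metis
  moreover have "Nl x \<noteq> 0" using unit_normal by auto
  ultimately show ?thesis using scaleR_cancel_right by blast
qed

lemma inner_X_lap_position: "X x \<bullet> lap_position = (X x \<bullet> Nl x) * (deriv \<phi> (e3comp (X x)) * e3comp (Nl x))"
  using inner_decomp[of "X x" lap_position] lap_position_tangential lap_position_normal
  by (simp add: inner_commute)

lemma pd_phi_height: "pd i (\<lambda>y. \<phi> (e3comp (X y))) x = deriv \<phi> (e3comp (X x)) * (pd i X x \<bullet> (0, 0, 1))"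
proof -
  have dX: "X differentiable (at x)" using X_differentiable x_in_U .
  have "(\<phi> has_real_derivative deriv \<phi> (e3comp (X x))) (at (e3comp (X x)))"
    using phi_differentiable by (simp add: DERIV_deriv_iff_real_differentiable)
  then have "pd i (\<lambda>y. \<phi> (X y \<bullet> (0, 0, 1))) x = deriv \<phi> (e3comp (X x)) * pd i (\<lambda>y. X y \<bullet> (0, 0, 1)) x"
    unfolding e3comp_def using dX by (intro pd_chain) simp_all
  then show ?thesis using pd_inner_const[OF dX] by (simp add: e3comp_def)
qed

lemma grad_inner_phi_rsq: "grad_inner X (\<lambda>y. \<phi> (e3comp (X y))) rsq x
    = 2 * deriv \<phi> (e3comp (X x)) * (e3comp (X x) - e3comp (Nl x) * (X x \<bullet> Nl x))"
proof -
  define e3 :: "real \<times> real \<times> real" where "e3 = (0, 0, 1)"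
  have "grad_inner X (\<lambda>y. \<phi> (e3comp (X y))) rsq x = 2 * deriv \<phi> (e3comp (X x)) *
      (ginv X 1 1 x * (e3 \<bullet> pd 1 X x) * (X x \<bullet> pd 1 X x) + ginv X 1 2 x * (e3 \<bullet> pd 1 X x) * (X x \<bullet> pd 2 X x)
     + ginv X 2 1 x * (e3 \<bullet> pd 2 X x) * (X x \<bullet> pd 1 X x) + ginv X 2 2 x * (e3 \<bullet> pd 2 X x) * (X x \<bullet> pd 2 X x))"
    unfolding grad_inner_def sum_one_two pd_phi_height pd_rsq[OF x_in_U] e3_def
    by (simp add: algebra_simps inner_commute)
  also have "\<dots> = 2 * deriv \<phi> (e3comp (X x)) * (e3 \<bullet> X x - (e3 \<bullet> Nl x) * (X x \<bullet> Nl x))"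
    using inner_decomp[of e3 "X x"] by simp
  finally show ?thesis by (simp add: e3comp_def e3_def inner_commute)
qed

lemma phi_lap_rsq: "phi_lap \<phi> X rsq x = 4 + 2 * deriv \<phi> (e3comp (X x)) * e3comp (X x)"
  unfolding phi_lap_def lap_rsq inner_X_lap_position grad_inner_phi_rsq by (simp add: algebra_simps)

lemma grad_inner_rsq_le: "grad_inner X rsq rsq x \<le> 4 * rsq x"
proof -
  have "grad_inner X rsq rsq x = 4 *
      (ginv X 1 1 x * (X x \<bullet> pd 1 X x) * (X x \<bullet> pd 1 X x) + ginv X 1 2 x * (X x \<bullet> pd 1 X x) * (X x \<bullet> pd 2 X x)
     + ginv X 2 1 x * (X x \<bullet> pd 2 X x) * (X x \<bullet> pd 1 X x) + ginv X 2 2 x * (X x \<bullet> pd 2 X x) * (X x \<bullet> pd 2 X x))"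
    unfolding grad_inner_def sum_one_two pd_rsq[OF x_in_U] by (simp add: algebra_simps)
  also have "\<dots> = 4 * (X x \<bullet> X x - (X x \<bullet> Nl x) * (X x \<bullet> Nl x))"
    using inner_decomp[of "X x" "X x"] by simp
  also have "\<dots> \<le> 4 * rsq x" by (simp add: rsq_def)
  finally show ?thesis .
qed

lemma ginv_pos_def: "ginv X 1 1 x > 0" "ginv X 1 1 x * ginv X 2 2 x - ginv X 1 2 x * ginv X 1 2 x > 0"
proof -
  have "pd 2 X x \<noteq> 0" using independent[rule_format, of 0 1] by auto
  then show "ginv X 1 1 x > 0" unfolding ginv_at using gdet_pos by simp
  have "ginv X 1 1 x * ginv X 2 2 x - ginv X 1 2 x * ginv X 1 2 x
      = ((pd 1 X x \<bullet> pd 1 X x) * (pd 2 X x \<bullet> pd 2 X x) - (pd 1 X x \<bullet> pd 2 X x) * (pd 1 X x \<bullet> pd 2 X x))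
        / (gdet X x * gdet X x)"
    unfolding ginv_at using gdet_pos by (simp add: field_simps)
  also have "\<dots> = 1 / gdet X x" unfolding gdet_at[symmetric] using gdet_pos by simp
  finally show "ginv X 1 1 x * ginv X 2 2 x - ginv X 1 2 x * ginv X 1 2 x > 0" using gdet_pos by simp
qed

lemma local_max_minus_rsq:
  fixes w :: "real \<times> real \<Rightarrow> real"
  assumes w: "Ck 2 U w" and max: "\<And>y. y \<in> U \<Longrightarrow> w y - \<epsilon> * rsq y \<le> w x - \<epsilon> * rsq x"
  shows "phi_lap \<phi> X w x \<le> \<epsilon> * (4 + 2 * deriv \<phi> (e3comp (X x)) * e3comp (X x))"
    "grad_inner X w w x \<le> 4 * \<epsilon>\<^sup>2 * rsq x"
proof -
  note dpw = Ck2_pd_differentiable[OF open_U x_in_U w]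
  note crit = local_max_minus_scaled[OF open_U x_in_U max Ck2_differentiable[OF open_U _ w]
      rsq_differentiable dpw pd_rsq_differentiable ginv_pos_def]
  have pw: "pd 1 w x = \<epsilon> * pd 1 rsq x" "pd 2 w x = \<epsilon> * pd 2 rsq x"
    using crit(1,2) by simp_all
  have ginv_sym: "ginv X 2 1 x = ginv X 1 2 x" by (simp add: ginv_at)
  have "lap X w x - \<epsilon> * lap X rsq x
      = ginv X 1 1 x * pd 1 (pd 1 w) x + ginv X 1 2 x * pd 1 (pd 2 w) x
        + ginv X 1 2 x * pd 2 (pd 1 w) x + ginv X 2 2 x * pd 2 (pd 2 w) x
        - \<epsilon> * (ginv X 1 1 x * pd 1 (pd 1 rsq) x + ginv X 1 2 x * pd 1 (pd 2 rsq) x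
        + ginv X 1 2 x * pd 2 (pd 1 rsq) x + ginv X 2 2 x * pd 2 (pd 2 rsq) x)"
    using lap_coordinates[of w] lap_coordinates[of rsq] dpw pd_rsq_differentiable
    by (simp add: ginv_sym pw algebra_simps)
  then have "lap X w x \<le> \<epsilon> * lap X rsq x" using crit(3) by simp
  moreover have "grad_inner X (\<lambda>y. \<phi> (e3comp (X y))) w x = \<epsilon> * grad_inner X (\<lambda>y. \<phi> (e3comp (X y))) rsq x"
    unfolding grad_inner_def sum_one_two pw by (simp add: algebra_simps)
  ultimately show "phi_lap \<phi> X w x \<le> \<epsilon> * (4 + 2 * deriv \<phi> (e3comp (X x)) * e3comp (X x))"
    unfolding phi_lap_rsq[symmetric] phi_lap_def by (simp add: algebra_simps)
  have "grad_inner X w w x = \<epsilon>\<^sup>2 * grad_inner X rsq rsq x"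
    unfolding grad_inner_def sum_one_two pw by (simp add: algebra_simps power2_eq_square)
  also have "\<dots> \<le> \<epsilon>\<^sup>2 * (4 * rsq x)"
    using grad_inner_rsq_le by (intro mult_left_mono) simp_all
  finally show "grad_inner X w w x \<le> 4 * \<epsilon>\<^sup>2 * rsq x" by simp
qed

lemma local_max_minus_rsq_small:
  fixes w :: "real \<times> real \<Rightarrow> real"
  assumes w: "Ck 2 U w" and max: "\<And>y. y \<in> U \<Longrightarrow> w y - \<epsilon> * rsq y \<le> w x - \<epsilon> * rsq x"
    and C: "C \<ge> 0" and growth: "\<And>t. \<bar>deriv \<phi> t\<bar> \<le> C * (1 + \<bar>t\<bar>)"
    and \<epsilon>: "0 < \<epsilon>" "\<epsilon> \<le> \<delta>" "\<epsilon> * rsq x < 2 * \<delta>"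
  shows "sqrt (grad_inner X w w x) < 3 * \<delta>" "phi_lap \<phi> X w x < (4 + 4 * C) * (3 * \<delta>)"
proof -
  note est = local_max_minus_rsq[OF w max]
  have \<delta>: "\<delta> > 0" and rsq: "\<epsilon> * rsq x \<ge> 0" using \<epsilon> by (simp_all add: rsq_def)
  have "grad_inner X w w x \<le> 4 * \<epsilon> * (\<epsilon> * rsq x)"
    using est(2) by (simp add: power2_eq_square algebra_simps)
  also have "\<dots> \<le> 4 * \<delta> * (2 * \<delta>)"
    using \<epsilon> \<delta> rsq by (intro mult_mono[of "4 * \<epsilon>"]) simp_all
  also have "\<dots> < (3 * \<delta>)\<^sup>2"
    using \<delta> by (simp add: power2_eq_square)
  finally have "sqrt (grad_inner X w w x) < \<bar>3 * \<delta>\<bar>"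
    unfolding real_sqrt_abs[symmetric] by (rule real_sqrt_less_mono)
  then show "sqrt (grad_inner X w w x) < 3 * \<delta>" using \<delta> by simp
  have "4 + 2 * deriv \<phi> (e3comp (X x)) * e3comp (X x) \<le> (4 + 4 * C) * (1 + rsq x)"
    unfolding rsq_def by (rule linear_growth_product_bound[OF C growth e3comp_sq_le])
  with est(1) \<epsilon>(1) have "phi_lap \<phi> X w x \<le> \<epsilon> * ((4 + 4 * C) * (1 + rsq x))"
    by (meson mult_left_mono order_trans less_imp_le)
  also have "\<dots> = (4 + 4 * C) * (\<epsilon> + \<epsilon> * rsq x)" by (simp add: algebra_simps)
  also have "\<dots> < (4 + 4 * C) * (3 * \<delta>)"
    using \<epsilon> C by (intro mult_strict_left_mono) simp_all
  finally show "phi_lap \<phi> X w x < (4 + 4 * C) * (3 * \<delta>)" .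
qed

end

section \<open>The perturbation argument on the surface\<close>

lemma continuous_on_surface:
  fixes g :: "'m::{t2_space, second_countable_topology} \<Rightarrow> 'b::topological_space"
  assumes imm: "immersed_surface A F N" and g: "\<And>U c. (U, c) \<in> A \<Longrightarrow> continuous_on U (g \<circ> c)"
  shows "continuous_on UNIV g"
proof -
  have "isCont g p" for p
  proof -
    have "p \<in> (\<Union>(U, c)\<in>A. c ` U)" using imm by (simp add: immersed_surface_def)
    then obtain U c where Uc: "(U, c) \<in> A" "p \<in> c ` U" by blast
    then obtain c' where o: "open (c ` U)" and h: "homeomorphism U (c ` U) c c'"
      using imm unfolding immersed_surface_def by fastforce
    have c'U: "c' ` (c ` U) = U" and cc': "\<And>q. q \<in> c ` U \<Longrightarrow> c (c' q) = q"
      and c': "continuous_on (c ` U) c'"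
      using h by (auto simp: homeomorphism_def)
    have "continuous_on (c ` U) ((g \<circ> c) \<circ> c')"
      by (rule continuous_on_compose[OF c']) (simp only: c'U g[OF Uc(1)])
    then have "continuous_on (c ` U) g"
      by (rule continuous_on_cong[THEN iffD1, rotated 2]) (auto simp: cc')
    then show "isCont g p" using o Uc(2) continuous_on_eq_continuous_at by blast
  qed
  then show ?thesis by (simp add: continuous_at_imp_continuous_on)
qed

lemma phi_minimal_chart_of_atlas:
  assumes imm: "immersed_surface A F N" and pm: "phi_minimal A F N \<phi>" and sm: "smooth_real \<phi>"
    and Uc: "(U, c) \<in> A" and x: "x \<in> U"
  shows "phi_minimal_chart (F \<circ> c) U x (N \<circ> c) \<phi>"
proof (intro phi_minimal_chart.intro regular_chart.intro phi_minimal_chart_axioms.intro)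
  show "open U" "x \<in> U" "Ck 2 U (F \<circ> c)"
    using imm Uc x unfolding immersed_surface_def smooth2_def by fastforce+
  show "\<forall>a b. a *\<^sub>R pd 1 (F \<circ> c) x + b *\<^sub>R pd 2 (F \<circ> c) x = 0 \<longrightarrow> a = 0 \<and> b = 0"
    "norm ((N \<circ> c) x) = 1" "(N \<circ> c) x \<bullet> pd 1 (F \<circ> c) x = 0" "(N \<circ> c) x \<bullet> pd 2 (F \<circ> c) x = 0"
    using imm Uc x unfolding immersed_surface_def by fastforce+
  show "mean_curv_vec (F \<circ> c) (N \<circ> c) x
      = (deriv \<phi> (e3comp ((F \<circ> c) x)) * e3comp ((N \<circ> c) x)) *\<^sub>R (N \<circ> c) x"
    using pm Uc x unfolding phi_minimal_def by fastforce
  show "\<phi> differentiable (at (e3comp ((F \<circ> c) x)))"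
    using sm unfolding smooth_real_def by (metis funpow_0)
qed

lemma proper_perturbation_attains_max:
  fixes u :: "'m::topological_space \<Rightarrow> real" and F :: "'m \<Rightarrow> real \<times> real \<times> real"
  assumes u: "continuous_on UNIV u" "bdd_above (range u)"
    and F: "continuous_on UNIV F" "proper_immersion F" and \<epsilon>: "\<epsilon> > 0"
  obtains p where "\<And>y. u y - \<epsilon> * (F y \<bullet> F y) \<le> u p - \<epsilon> * (F p \<bullet> F p)"
proof -
  define f where "f p = u p - \<epsilon> * (F p \<bullet> F p)" for p
  define M where "M = Sup (range u)"
  have uM: "u y \<le> M" for y unfolding M_def by (rule cSup_upper[OF rangeI u(2)])
  fix q
  define S where "S = {p. f q \<le> f p}"
  have f: "continuous_on UNIV f"
    unfolding f_def[abs_def] by (intro continuous_intros u(1) F(1))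
  have "S \<subseteq> F -` cball 0 (sqrt ((M - f q) / \<epsilon>))"
  proof
    fix p assume "p \<in> S"
    then have "\<epsilon> * (F p \<bullet> F p) \<le> M - f q" using uM[of p] by (simp add: S_def f_def)
    then have "F p \<bullet> F p \<le> (M - f q) / \<epsilon>" using \<epsilon> by (simp add: field_simps)
    then show "p \<in> F -` cball 0 (sqrt ((M - f q) / \<epsilon>))"
      by (simp add: norm_eq_sqrt_inner)
  qed
  moreover have "closed S"
    unfolding S_def using f by (rule closed_Collect_le[OF continuous_on_const])
  moreover have "compact (F -` cball 0 (sqrt ((M - f q) / \<epsilon>)))"
    using F(2) unfolding proper_immersion_def by simp
  ultimately have "compact S"
    using compact_Int_closed[of "F -` cball 0 (sqrt ((M - f q) / \<epsilon>))" S] by (simp add: inf.absorb2)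
  moreover have "q \<in> S" by (simp add: S_def)
  ultimately obtain p where p: "p \<in> S" "\<And>y. y \<in> S \<Longrightarrow> f y \<le> f p"
    using continuous_attains_sup[of S f] continuous_on_subset[OF f subset_UNIV] by blast
  have "f y \<le> f p" for y
  proof (cases "y \<in> S")
    case False
    then have "f y < f q" by (simp add: S_def)
    also have "f q \<le> f p" using p(1) by (simp add: S_def)
    finally show ?thesis by simp
  qed (rule p(2))
  then show ?thesis by (intro that) (simp add: f_def)
qed

lemma omori_yau_point:
  fixes A :: "((real \<times> real) set \<times> (real \<times> real \<Rightarrow> 'm::{t2_space, second_countable_topology})) set"
  assumes sm: "smooth_real \<phi>" and C: "C \<ge> 0" and growth: "\<And>t. \<bar>deriv \<phi> t\<bar> \<le> C * (1 + \<bar>t\<bar>)"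
    and imm: "immersed_surface A F N" and proper: "proper_immersion F" and pm: "phi_minimal A F N \<phi>"
    and u: "C2_on_surface A u" "bdd_above (range u)" and \<eta>: "\<eta> > 0"
  shows "\<exists>p. u p > Sup (range u) - \<eta> \<and> (\<exists>(U, c)\<in>A. \<exists>x\<in>U. c x = p
    \<and> sqrt (grad_inner (F \<circ> c) (u \<circ> c) (u \<circ> c) x) < \<eta> \<and> phi_lap \<phi> (F \<circ> c) (u \<circ> c) x < \<eta>)"
proof -
  define M where "M = Sup (range u)"
  have uM: "u y \<le> M" for y unfolding M_def by (rule cSup_upper[OF rangeI u(2)])
  have u2: "Ck 2 U (u \<circ> c)" if "(U, c) \<in> A" for U c
    using u(1) that unfolding C2_on_surface_def by fastforce
  have "continuous_on U (F \<circ> c)" if "(U, c) \<in> A" for U c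
  proof -
    have "smooth2 U (F \<circ> c)" using imm that unfolding immersed_surface_def by fast
    then show ?thesis unfolding smooth2_def using Ck_continuous_on by blast
  qed
  then have continuity: "continuous_on UNIV F" "continuous_on UNIV u"
    using continuous_on_surface[OF imm] Ck_continuous_on[OF u2] by blast+
  define \<delta> where "\<delta> = \<eta> / (12 * C + 15)"
  have \<delta>: "\<delta> > 0" using C \<eta> by (simp add: \<delta>_def)
  obtain q where q: "u q > M - \<delta>"
    using less_cSup_iff[OF _ u(2), of "M - \<delta>"] \<delta> unfolding M_def by auto
  define \<epsilon> where "\<epsilon> = \<delta> / (1 + F q \<bullet> F q)"
  have \<epsilon>: "\<epsilon> > 0" "\<epsilon> \<le> \<delta>" "\<epsilon> * (F q \<bullet> F q) < \<delta>"
    using \<delta> by (simp_all add: \<epsilon>_def field_simps add_pos_nonneg)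
  obtain p where max: "\<And>y. u y - \<epsilon> * (F y \<bullet> F y) \<le> u p - \<epsilon> * (F p \<bullet> F p)"
    using proper_perturbation_attains_max[OF continuity(2) u(2) continuity(1) proper \<epsilon>(1)] by blast
  have "\<epsilon> * (F p \<bullet> F p) \<ge> 0" "\<epsilon> * (F q \<bullet> F q) \<ge> 0" using \<epsilon>(1) by simp_all
  then have \<epsilon>p: "\<epsilon> * (F p \<bullet> F p) < 2 * \<delta>" and up: "u p > M - 2 * \<delta>"
    using max[of q] uM[of p] q \<epsilon>(3) by linarith+
  have "p \<in> (\<Union>(U, c)\<in>A. c ` U)" using imm by (simp add: immersed_surface_def)
  then obtain U c x where Uc: "(U, c) \<in> A" and x: "x \<in> U" "c x = p" by blast
  interpret chart: phi_minimal_chart "F \<circ> c" U x "N \<circ> c" \<phi>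
    by (rule phi_minimal_chart_of_atlas[OF imm pm sm Uc x(1)])
  have max_chart: "(u \<circ> c) y - \<epsilon> * chart.rsq y \<le> (u \<circ> c) x - \<epsilon> * chart.rsq x" if "y \<in> U" for y
    using max[of "c y"] x(2) by (simp add: chart.rsq_def)
  have "\<epsilon> * chart.rsq x < 2 * \<delta>" using \<epsilon>p x(2) by (simp add: chart.rsq_def)
  note small = chart.local_max_minus_rsq_small[OF u2[OF Uc] max_chart C growth \<epsilon>(1,2) this]
  have "(4 + 4 * C) * (3 * \<delta>) < \<eta>" "3 * \<delta> \<le> \<eta>"
    using \<eta> C by (simp_all add: \<delta>_def field_simps)
  with up small \<delta> have "u p > Sup (range u) - \<eta>"
    "sqrt (grad_inner (F \<circ> c) (u \<circ> c) (u \<circ> c) x) < \<eta>" "phi_lap \<phi> (F \<circ> c) (u \<circ> c) x < \<eta>"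
    unfolding M_def by linarith+
  with Uc x show ?thesis by blast
qed

lemma omori_yau_intro:
  assumes "\<And>u \<eta>. C2_on_surface A u \<Longrightarrow> bdd_above (range u) \<Longrightarrow> \<eta> > 0 \<Longrightarrow>
    \<exists>p. u p > Sup (range u) - \<eta> \<and> (\<exists>(U, c)\<in>A. \<exists>x\<in>U. c x = p
      \<and> sqrt (grad_inner (F \<circ> c) (u \<circ> c) (u \<circ> c) x) < \<eta> \<and> phi_lap \<phi> (F \<circ> c) (u \<circ> c) x < \<eta>)"
  shows "omori_yau A F \<phi>"
  unfolding omori_yau_def
proof (intro allI impI)
  fix u :: "'a \<Rightarrow> real"
  assume "C2_on_surface A u" "bdd_above (range u)"
  from assms[OF this] have "\<forall>n. \<exists>p. n \<ge> 1 \<longrightarrow> u p > Sup (range u) - 1 / real n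
      \<and> (\<exists>(U, c)\<in>A. \<exists>x\<in>U. c x = p
        \<and> sqrt (grad_inner (F \<circ> c) (u \<circ> c) (u \<circ> c) x) < 1 / real n
        \<and> phi_lap \<phi> (F \<circ> c) (u \<circ> c) x < 1 / real n)"
    by simp
  then show "\<exists>p. \<forall>n. n \<ge> 1 \<longrightarrow> u (p n) > Sup (range u) - 1 / real n
      \<and> (\<exists>(U, c)\<in>A. \<exists>x\<in>U. c x = p n
        \<and> sqrt (grad_inner (F \<circ> c) (u \<circ> c) (u \<circ> c) x) < 1 / real n
        \<and> phi_lap \<phi> (F \<circ> c) (u \<circ> c) x < 1 / real n)"
    by (rule choice)
qed

lemma omori_yau_imp_phi_stoch_complete: "omori_yau A F \<phi> \<Longrightarrow> phi_stoch_complete A F \<phi>"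
  unfolding omori_yau_def phi_stoch_complete_def by fast

theorem corollary2p8:
  fixes A :: "((real \<times> real) set \<times> (real \<times> real \<Rightarrow> 'm::{t2_space, second_countable_topology})) set"
    and F N :: "'m \<Rightarrow> real \<times> real \<times> real"
    and \<phi> :: "real \<Rightarrow> real"
  assumes "smooth_real \<phi>"
    and "\<exists>C>0. \<forall>t. \<bar>deriv \<phi> t\<bar> \<le> C * (1 + \<bar>t\<bar>)"
    and "immersed_surface A F N"
    and "proper_immersion F"
    and "phi_minimal A F N \<phi>"
  shows "omori_yau A F \<phi> \<and> phi_stoch_complete A F \<phi>"
proof -
  obtain C where C: "C \<ge> 0" and growth: "\<And>t. \<bar>deriv \<phi> t\<bar> \<le> C * (1 + \<bar>t\<bar>)"
    using assms(2) less_imp_le by blast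
  have "omori_yau A F \<phi>"
    by (rule omori_yau_intro) (rule omori_yau_point[OF assms(1) C growth assms(3-5)])
  then show ?thesis using omori_yau_imp_phi_stoch_complete by blast
qed

end
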